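(* Let $\mathcal{H}$ be a finite-dimensional Hilbert space, $\ket{h}\in\mathcal{H}$ a unit vector, and $W_1,\ldots,W_l$ subspaces of $\mathcal{H}$. Let $0<\alpha_j<1$ for $j\in[l]$, set $\alpha:=\min_j\alpha_j$ and $\epsilon_j:=\|\Pi_{W_j}\ket{h}\|_2^2$. Let $\mathbf{W}_{(\alpha_1,\ldots,\alpha_l)}$ be the $(\alpha_1,\ldots,\alpha_l)$-tilted span of $W_1,\ldots,W_l$ (defined in the context), and view $\ket h$ as a vector of $\tilde{\mathcal{H}}$ via the identity embedding. Then $$\max_{j\in[l]}(1-\alpha_j)\epsilon_j\ \le\ \|\Pi_{\mathbf{W}_{(\alpha_1,\ldots,\alpha_l)}}\ket{h}\|_2^2\ \le\ \frac{1-\alpha}{\alpha}\sum_{j=1}^l\epsilon_j.$$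
   Context: Tilted span: Let $\mathcal{H}_1,\ldots,\mathcal{H}_l$ be Hilbert spaces each of dimension $\dim\mathcal{H}$, and $\tilde{\mathcal{H}}:=\mathcal{H}\oplus\mathcal{H}_1\oplus\cdots\oplus\mathcal{H}_l$ (orthogonal direct sum). Let $\mathcal{T}_j$ be a linear map taking $\mathcal{H}$ isometrically onto $\mathcal{H}_j$. For $0<\alpha_j<1$ define the isometric embedding $\mathcal{T}_{j,\alpha_j}:=\sqrt{1-\alpha_j}\,\mathbb{1}_{\mathcal{H}}+\sqrt{\alpha_j}\,\mathcal{T}_j:\mathcal{H}\to\tilde{\mathcal{H}}$, where $\mathbb{1}_{\mathcal{H}}$ is the identity embedding of $\mathcal{H}$ into $\tilde{\mathcal{H}}$. For subspaces $W_1,\dots,W_l\le\mathcal{H}$, the $(\alpha_1,\ldots,\alpha_l)$-tilted span is the subspace $\mathbf{W}_{(\alpha_1,\ldots,\alpha_l)}:=\sum_{j=1}^l\mathcal{T}_{j,\alpha_j}(W_j)\le\tilde{\mathcal{H}}$ (a sum, not necessarily direct); if all $\alpha_j=\alpha$ it is written $\mathbf{W}_\alpha$. $\Pi_X$ denotes the orthogonal projection onto a subspace $X$. *)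

theory Defs
  imports "HOL-Analysis.Analysis"
begin

text \<open>The finite-dimensional complex Hilbert space H is modelled as complex^'n
  with the standard (conjugate-linear in the first argument) inner product; the
  norm on complex^'n is the Euclidean 2-norm.\<close>

definition cinner :: "complex^'n \<Rightarrow> complex^'n \<Rightarrow> complex" where
  "cinner x y = (\<Sum>i\<in>UNIV. cnj (x $ i) * y $ i)"

definition csubspace :: "(complex^'n) set \<Rightarrow> bool" where
  "csubspace S \<longleftrightarrow> 0 \<in> S \<and> (\<forall>x\<in>S. \<forall>y\<in>S. x + y \<in> S) \<and> (\<forall>c. \<forall>x\<in>S. c *s x \<in> S)"

definition cproj :: "(complex^'n) set \<Rightarrow> complex^'n \<Rightarrow> complex^'n" where
  "cproj S h = (THE p. p \<in> S \<and> (\<forall>w\<in>S. cinner w (h - p) = 0))"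

definition cunitary :: "(complex^'n \<Rightarrow> complex^'n) \<Rightarrow> bool" where
  "cunitary U \<longleftrightarrow> (\<forall>x y. U (x + y) = U x + U y) \<and> (\<forall>c x. U (c *s x) = c *s U x)
     \<and> (\<forall>x. norm (U x) = norm x) \<and> surj U"

text \<open>The big space H~ = H \<oplus> H_1 \<oplus> ... \<oplus> H_l is complex^('n \<times> 'l option):
  block None is H, block Some j is H_j.\<close>
definition embed0 :: "complex^'n \<Rightarrow> complex^('n \<times> 'l::finite option)" where
  "embed0 x = (\<chi> p. if snd p = None then x $ fst p else 0)"

definition embedj :: "'l::finite \<Rightarrow> complex^'n \<Rightarrow> complex^('n \<times> 'l::finite option)" where
  "embedj j x = (\<chi> p. if snd p = Some j then x $ fst p else 0)"

text \<open>T_j = embedj j \<circ> U j is a general isometry of H onto H_j (U j unitary);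
  T_{j,a} = sqrt(1-a) 1_H + sqrt a T_j.\<close>
definition tilt :: "('l::finite \<Rightarrow> complex^'n \<Rightarrow> complex^'n) \<Rightarrow> real \<Rightarrow> 'l \<Rightarrow> complex^'n
                    \<Rightarrow> complex^('n \<times> 'l::finite option)" where
  "tilt U a j x = complex_of_real (sqrt (1 - a)) *s embed0 x
                 + complex_of_real (sqrt a) *s embedj j (U j x)"

definition tilted_span :: "('l::finite \<Rightarrow> complex^'n \<Rightarrow> complex^'n) \<Rightarrow> ('l \<Rightarrow> real)
      \<Rightarrow> ('l \<Rightarrow> (complex^'n) set) \<Rightarrow> (complex^('n \<times> 'l option)) set" where
  "tilted_span U a W = {(\<Sum>j\<in>UNIV. tilt U (a j) j (w j)) | w. \<forall>j. w j \<in> W j}"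

end

theory Submission
  imports Defs
begin

text \<open>Let \<open>P\<close> be the projection of \<open>h\<close> onto the tilted span and \<open>q\<^sub>j\<close> that of \<open>h\<close> onto \<open>W\<^sub>j\<close>.
  Lower bound: \<open>T\<^sub>j,\<^sub>\<alpha>\<^sub>j q\<^sub>j\<close> lies in the tilted span, has norm \<open>\<parallel>q\<^sub>j\<parallel>\<close> and inner product
  \<open>\<surd>(1-\<alpha>\<^sub>j) \<parallel>q\<^sub>j\<parallel>\<^sup>2\<close> with \<open>h\<close>, so Cauchy--Schwarz against \<open>P\<close> gives \<open>\<surd>(1-\<alpha>\<^sub>j) \<parallel>q\<^sub>j\<parallel> \<le> \<parallel>P\<parallel>\<close>.
  Upper bound: write \<open>P = \<Sum>\<^sub>j T\<^sub>j,\<^sub>\<alpha>\<^sub>j w\<^sub>j\<close>. Only the \<open>H\<close>-block of \<open>P\<close> meets \<open>h\<close>, so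
  \<open>\<parallel>P\<parallel>\<^sup>2 = \<langle>P,h\<rangle> \<le> \<surd>(1-\<alpha>) \<Sum>\<^sub>j \<parallel>w\<^sub>j\<parallel>\<parallel>q\<^sub>j\<parallel> \<le> \<surd>((1-\<alpha>) X E)\<close> with \<open>X = \<Sum>\<^sub>j \<parallel>w\<^sub>j\<parallel>\<^sup>2\<close>, \<open>E = \<Sum>\<^sub>j \<epsilon>\<^sub>j\<close>;
  the \<open>H\<^sub>j\<close>-blocks are mutually orthogonal, so \<open>\<parallel>P\<parallel>\<^sup>2 \<ge> \<Sum>\<^sub>j \<alpha>\<^sub>j \<parallel>w\<^sub>j\<parallel>\<^sup>2 \<ge> \<alpha> X\<close>.
  Eliminating \<open>X\<close> yields \<open>\<alpha> \<parallel>P\<parallel>\<^sup>2 \<le> (1-\<alpha>) E\<close>.\<close>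

lemma of_real_smult_eq_scaleR: "complex_of_real r *s (x::complex^'m) = r *\<^sub>R x"
  by (simp add: vec_eq_iff) (simp add: scaleR_conv_of_real)

lemma inner_eq_Re_cinner: "inner x y = Re (cinner x (y::complex^'m))"
  by (simp add: inner_vec_def cinner_def Re_sum inner_complex_def)

lemma cinner_ii_smult_left: "cinner (\<i> *s x) (y::complex^'m) = - \<i> * cinner x y"
  by (simp add: cinner_def sum_distrib_left mult.assoc)

lemma csubspace_imp_subspace: "csubspace S \<Longrightarrow> subspace (S::(complex^'m) set)"
  unfolding csubspace_def subspace_def by (metis of_real_smult_eq_scaleR)

text \<open>Real orthogonality to a complex subspace \<open>S\<close> already means complex orthogonality,
  because \<open>S\<close> is closed under multiplication by \<open>\<i>\<close>.\<close>

lemma cproj_eq_real_projection: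
  assumes S: "csubspace (S::(complex^'m) set)" and "y \<in> S" and "\<And>w. w \<in> S \<Longrightarrow> inner w (h - y) = 0"
  shows "cproj S h = y"
proof -
  have complex_orth: "cinner w (h - y) = 0" if w: "w \<in> S" for w
  proof -
    have "\<i> *s w \<in> S" using S w unfolding csubspace_def by blast
    then have "Re (cinner (\<i> *s w) (h - y)) = 0" using assms(3) by (simp add: inner_eq_Re_cinner)
    moreover have "Re (cinner w (h - y)) = 0" using assms(3) w by (simp add: inner_eq_Re_cinner)
    ultimately show ?thesis by (simp add: cinner_ii_smult_left complex_eq_iff)
  qed
  show ?thesis unfolding cproj_def
  proof (rule the_equality)
    show "y \<in> S \<and> (\<forall>w\<in>S. cinner w (h - y) = 0)" using \<open>y \<in> S\<close> complex_orth by blast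
  next
    fix p assume p: "p \<in> S \<and> (\<forall>w\<in>S. cinner w (h - p) = 0)"
    have "p - y \<in> S" using csubspace_imp_subspace[OF S] p \<open>y \<in> S\<close> by (simp add: subspace_diff)
    then have "inner (p - y) (h - p) = 0" "inner (p - y) (h - y) = 0"
      using p assms(3) by (auto simp: inner_eq_Re_cinner)
    then have "inner (p - y) (p - y) = 0" by (simp add: inner_diff_right)
    then show "p = y" by simp
  qed
qed

lemma cproj_in_orthogonal:
  assumes S: "csubspace (S::(complex^'m) set)"
  shows "cproj S h \<in> S" and "w \<in> S \<Longrightarrow> inner w (h - cproj S h) = 0"
proof -
  have "span S = S" using csubspace_imp_subspace[OF S] by (simp add: span_eq_iff)
  then obtain y z where y: "y \<in> S" and z: "\<And>w. w \<in> S \<Longrightarrow> orthogonal z w" and "h = y + z"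
    using orthogonal_subspace_decomp_exists[of S h] by metis
  then have orth: "inner w (h - y) = 0" if "w \<in> S" for w
    using that by (simp add: orthogonal_def inner_commute)
  have "cproj S h = y" by (rule cproj_eq_real_projection[OF S y orth])
  with y orth show "cproj S h \<in> S" "w \<in> S \<Longrightarrow> inner w (h - cproj S h) = 0" by auto
qed

lemma inner_cproj_right:
  assumes "csubspace (S::(complex^'m) set)" "w \<in> S"
  shows "inner w (cproj S h) = inner w h"
  using cproj_in_orthogonal(2)[OF assms] by (simp add: inner_diff_right)

lemma norm_cproj_squared:
  "csubspace (S::(complex^'m) set) \<Longrightarrow> (norm (cproj S h))\<^sup>2 = inner (cproj S h) h"
  by (simp add: power2_norm_eq_inner inner_cproj_right cproj_in_orthogonal(1))

lemma inner_le_norm_mult_norm_cproj: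
  assumes "csubspace (S::(complex^'m) set)" "v \<in> S"
  shows "inner v h \<le> norm v * norm (cproj S h)"
  using inner_cproj_right[OF assms] norm_cauchy_schwarz[of v "cproj S h"] by simp

lemma sum_UNIV_prod:
  "(\<Sum>p\<in>(UNIV::('a::finite \<times> 'b::finite) set). f p) = (\<Sum>i\<in>UNIV. \<Sum>k\<in>UNIV. f (i, k))"
  unfolding UNIV_Times_UNIV[symmetric] sum.cartesian_product by simp

lemma inner_embed0:
  "inner (embed0 x :: complex^('n::finite \<times> 'l::finite option)) (embed0 y) = inner x y"
proof -
  have expand: "\<And>i k. inner (if k = None then x $ i else 0) (if k = None then y $ i else 0)
              = (if k = None then inner (x $ i) (y $ i) else 0)"
    by simp
  show ?thesis
    unfolding inner_vec_def embed0_def sum_UNIV_prod by (simp only: fst_conv snd_conv vec_lambda_beta expand) simp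
qed

lemma inner_embedj:
  "inner (embedj j x :: complex^('n::finite \<times> 'l::finite option)) (embedj k y)
     = (if j = k then inner x y else 0)"
proof -
  have expand: "\<And>i m. inner (if m = Some j then x $ i else 0) (if m = Some k then y $ i else 0)
              = (if j = k \<and> m = Some j then inner (x $ i) (y $ i) else 0)"
    by simp
  show ?thesis
    unfolding inner_vec_def embedj_def sum_UNIV_prod by (simp only: fst_conv snd_conv vec_lambda_beta expand) simp
qed

lemma inner_embed0_embedj:
  "inner (embed0 x :: complex^('n::finite \<times> 'l::finite option)) (embedj k y) = 0"
proof -
  have expand: "\<And>i m. inner (if m = None then x $ i else 0) (if m = Some k then y $ i else 0) = 0"
    by simp
  show ?thesis
    unfolding inner_vec_def embed0_def embedj_def sum_UNIV_prod
    by (simp only: fst_conv snd_conv vec_lambda_beta expand) simp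
qed

lemma tilt_eq_scaleR:
  "tilt U a j x = sqrt (1 - a) *\<^sub>R embed0 x + sqrt a *\<^sub>R embedj j (U j x)"
  by (simp add: tilt_def of_real_smult_eq_scaleR)

lemma inner_tilt_embed0:
  "inner (tilt U a j x :: complex^('n::finite \<times> 'l::finite option)) (embed0 h) = sqrt (1 - a) * inner x h"
  unfolding tilt_eq_scaleR
  by (simp add: inner_add_left inner_embed0 inner_commute[of "embedj _ _" "embed0 _"] inner_embed0_embedj)

lemma mult_le_from_product_bounds:
  fixes N X E c m :: real
  assumes "0 \<le> N" "0 \<le> m" "0 \<le> c" "0 \<le> E"
    and "N\<^sup>2 \<le> c * X * E" and "m * X \<le> N"
  shows "m * N \<le> c * E"
proof (cases "N = 0")
  case True
  then show ?thesis using assms by simp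
next
  case False
  have "N * (m * N) \<le> c * (m * X) * E"
    using mult_left_mono[OF assms(5) assms(2)] by (simp add: power2_eq_square algebra_simps)
  also have "\<dots> \<le> c * N * E"
    using assms by (intro mult_right_mono mult_left_mono) auto
  finally show ?thesis using False assms(1) by (simp add: algebra_simps)
qed

context
  fixes U :: "'l::finite \<Rightarrow> complex^'n::finite \<Rightarrow> complex^'n"
  assumes U: "\<And>j. cunitary (U j)"
begin

lemma unitary_add: "U j (x + y) = U j x + U j y"
  and unitary_smult: "U j (c *s x) = c *s U j x"
  and norm_unitary: "norm (U j x) = norm x"
  using U[of j] unfolding cunitary_def by auto

lemma unitary_zero: "U j 0 = 0"
  using norm_unitary[of j 0] by simp

lemma tilt_add: "(tilt U a j (x + y) :: complex^('n \<times> 'l option)) = tilt U a j x + tilt U a j y"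
  by (simp add: tilt_def embed0_def embedj_def vec_eq_iff unitary_add algebra_simps)

lemma tilt_smult: "(tilt U a j (c *s x) :: complex^('n \<times> 'l option)) = c *s tilt U a j x"
  by (simp add: tilt_def embed0_def embedj_def vec_eq_iff unitary_smult algebra_simps)

lemma tilt_zero: "(tilt U a j 0 :: complex^('n \<times> 'l option)) = 0"
  by (simp add: tilt_def embed0_def embedj_def vec_eq_iff unitary_zero)

lemma norm_tilt:
  assumes "0 \<le> a" "a \<le> 1"
  shows "norm (tilt U a j x :: complex^('n \<times> 'l option)) = norm x"
proof -
  have "(norm (tilt U a j x :: complex^('n \<times> 'l option)))\<^sup>2
          = (1 - a) * (norm x)\<^sup>2 + a * (norm (U j x))\<^sup>2"
    unfolding tilt_eq_scaleR power2_norm_eq_inner using assms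
    by (simp add: inner_add_left inner_add_right inner_embed0 inner_embedj inner_embed0_embedj
        inner_commute[of "embedj _ _" "embed0 _"] algebra_simps)
  then show ?thesis by (simp add: norm_unitary algebra_simps power2_eq_iff_nonneg)
qed

lemma csubspace_tilted_span:
  assumes "\<And>j. csubspace (W j)"
  shows "csubspace (tilted_span U a W :: (complex^('n \<times> 'l option)) set)"
  unfolding csubspace_def
proof (intro conjI ballI allI)
  show "0 \<in> tilted_span U a W"
    unfolding tilted_span_def using assms by (auto simp: csubspace_def tilt_zero intro!: exI[of _ "\<lambda>_. 0"])
next
  fix x y assume "x \<in> tilted_span U a W" "y \<in> tilted_span U a W"
  then obtain w v where "\<forall>j. w j \<in> W j" "x = (\<Sum>j\<in>UNIV. tilt U (a j) j (w j))"
    and "\<forall>j. v j \<in> W j" "y = (\<Sum>j\<in>UNIV. tilt U (a j) j (v j))"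
    unfolding tilted_span_def by blast
  then show "x + y \<in> tilted_span U a W"
    unfolding tilted_span_def using assms
    by (auto simp: csubspace_def tilt_add sum.distrib intro!: exI[of _ "\<lambda>j. w j + v j"])
next
  fix c x assume "x \<in> tilted_span U a W"
  then obtain w where w: "\<forall>j. w j \<in> W j" "x = (\<Sum>j\<in>UNIV. tilt U (a j) j (w j))"
    unfolding tilted_span_def by blast
  then have "c *s x = (\<Sum>j\<in>UNIV. tilt U (a j) j (c *s w j))"
    by (simp add: tilt_smult vec_eq_iff sum_component sum_distrib_left)
  then show "c *s x \<in> tilted_span U a W"
    unfolding tilted_span_def using assms w by (auto simp: csubspace_def)
qed

lemma tilt_in_tilted_span:
  assumes "\<And>k. csubspace (W k)" "x \<in> W j"
  shows "(tilt U (a j) j x :: complex^('n \<times> 'l option)) \<in> tilted_span U a W"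
proof -
  have "(\<Sum>k\<in>UNIV. tilt U (a k) k (if k = j then x else 0))
          = (tilt U (a j) j x :: complex^('n \<times> 'l option))"
    by (simp add: tilt_zero if_distrib[of "tilt U _ _"] cong: if_cong)
  moreover have "\<forall>k. (if k = j then x else 0) \<in> W k"
    using assms by (simp add: csubspace_def)
  ultimately show ?thesis
    unfolding tilted_span_def by (intro CollectI exI[of _ "\<lambda>k. if k = j then x else 0"]) simp
qed

text \<open>The \<open>H\<close>-components are dropped; the \<open>H\<^sub>j\<close>-components are orthogonal to each other.\<close>

lemma norm_sum_tilt_lower_bound:
  assumes "\<And>j. 0 \<le> a j"
  shows "(\<Sum>j\<in>UNIV. a j * (norm (w j))\<^sup>2)
           \<le> (norm (\<Sum>j\<in>UNIV. tilt U (a j) j (w j) :: complex^('n \<times> 'l option)))\<^sup>2"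
proof -
  define A :: "complex^('n \<times> 'l option)" where "A = (\<Sum>j\<in>UNIV. sqrt (1 - a j) *\<^sub>R embed0 (w j))"
  define B :: "complex^('n \<times> 'l option)" where "B = (\<Sum>j\<in>UNIV. sqrt (a j) *\<^sub>R embedj j (U j (w j)))"
  have "inner A B = 0"
    unfolding A_def B_def by (simp add: inner_sum_left inner_sum_right inner_embed0_embedj)
  moreover have "inner B B = (\<Sum>j\<in>UNIV. a j * (norm (w j))\<^sup>2)"
  proof -
    have entry: "inner (sqrt (a j) *\<^sub>R embedj j (U j (w j)))
                   (sqrt (a k) *\<^sub>R embedj k (U k (w k)) :: complex^('n \<times> 'l option))
                 = (if j = k then a j * (norm (w j))\<^sup>2 else 0)" for j k
      using assms by (simp add: inner_embedj norm_unitary power2_norm_eq_inner[symmetric])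
    show ?thesis unfolding B_def inner_sum_left inner_sum_right entry by simp
  qed
  moreover have "(norm (A + B))\<^sup>2 = inner A A + 2 * inner A B + inner B B"
    by (simp add: power2_norm_eq_inner inner_add_left inner_add_right inner_commute[of B A])
  moreover have "(\<Sum>j\<in>UNIV. tilt U (a j) j (w j) :: complex^('n \<times> 'l option)) = A + B"
    unfolding A_def B_def tilt_eq_scaleR by (simp add: sum.distrib)
  ultimately show ?thesis by simp
qed

lemma norm_cproj_tilted_span_lower_bound:
  assumes W: "\<And>k. csubspace (W k)" and "0 \<le> a j" "a j \<le> 1"
  shows "(1 - a j) * (norm (cproj (W j) h))\<^sup>2
           \<le> (norm (cproj (tilted_span U a W) (embed0 h :: complex^('n \<times> 'l option))))\<^sup>2"
proof -
  define q where "q = cproj (W j) h"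
  define v :: "complex^('n \<times> 'l option)" where "v = tilt U (a j) j q"
  define P where "P = cproj (tilted_span U a W) (embed0 h :: complex^('n \<times> 'l option))"
  have "q \<in> W j" unfolding q_def using W by (rule cproj_in_orthogonal(1))
  then have "v \<in> tilted_span U a W" unfolding v_def by (rule tilt_in_tilted_span[OF W])
  have "sqrt (1 - a j) * (norm q)\<^sup>2 = inner v (embed0 h)"
    unfolding v_def inner_tilt_embed0 q_def by (simp add: norm_cproj_squared W)
  also have "\<dots> \<le> norm v * norm P"
    unfolding P_def by (rule inner_le_norm_mult_norm_cproj[OF csubspace_tilted_span[OF W]]) fact
  also have "norm v = norm q" unfolding v_def using assms by (simp add: norm_tilt)
  finally have "sqrt (1 - a j) * norm q \<le> norm P"
    by (cases "q = 0") (simp_all add: power2_eq_square mult.assoc)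
  then have "(sqrt (1 - a j) * norm q)\<^sup>2 \<le> (norm P)\<^sup>2"
    by (rule power_mono) (use assms in simp)
  then show ?thesis using assms by (simp add: P_def q_def power_mult_distrib)
qed

lemma norm_cproj_tilted_span_upper_bound:
  assumes W: "\<And>k. csubspace (W k)" and "0 \<le> m" and a: "\<And>j. m \<le> a j \<and> a j \<le> 1"
  shows "m * (norm (cproj (tilted_span U a W) (embed0 h :: complex^('n \<times> 'l option))))\<^sup>2
           \<le> (1 - m) * (\<Sum>j\<in>UNIV. (norm (cproj (W j) h))\<^sup>2)"
proof -
  define q where "q j = cproj (W j) h" for j
  define P where "P = cproj (tilted_span U a W) (embed0 h :: complex^('n \<times> 'l option))"
  have V: "csubspace (tilted_span U a W :: (complex^('n \<times> 'l option)) set)"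
    by (rule csubspace_tilted_span[OF W])
  obtain w where w: "\<And>j. w j \<in> W j" and P_eq: "P = (\<Sum>j\<in>UNIV. tilt U (a j) j (w j))"
    using cproj_in_orthogonal(1)[OF V] unfolding P_def tilted_span_def by blast
  define S where "S = (\<Sum>j\<in>UNIV. norm (w j) * norm (q j))"
  define X where "X = (\<Sum>j\<in>UNIV. (norm (w j))\<^sup>2)"
  define E where "E = (\<Sum>j\<in>UNIV. (norm (q j))\<^sup>2)"
  have "m \<le> 1" using a[of undefined] by linarith
  have "(norm P)\<^sup>2 = inner P (embed0 h)"
    unfolding P_def by (rule norm_cproj_squared[OF V])
  also have "\<dots> = (\<Sum>j\<in>UNIV. sqrt (1 - a j) * inner (w j) (q j))"
    unfolding P_eq q_def by (simp add: inner_sum_left inner_tilt_embed0 inner_cproj_right W w)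
  also have "\<dots> \<le> (\<Sum>j\<in>UNIV. sqrt (1 - m) * (norm (w j) * norm (q j)))"
  proof (rule sum_mono)
    fix j
    have "sqrt (1 - a j) * inner (w j) (q j) \<le> sqrt (1 - a j) * (norm (w j) * norm (q j))"
      by (rule mult_left_mono[OF norm_cauchy_schwarz]) (use a[of j] in simp)
    also have "\<dots> \<le> sqrt (1 - m) * (norm (w j) * norm (q j))"
      by (rule mult_right_mono) (use a[of j] in simp_all)
    finally show "sqrt (1 - a j) * inner (w j) (q j) \<le> sqrt (1 - m) * (norm (w j) * norm (q j))" .
  qed
  also have "\<dots> = sqrt (1 - m) * S"
    unfolding S_def by (simp add: sum_distrib_left)
  finally have "((norm P)\<^sup>2)\<^sup>2 \<le> (sqrt (1 - m) * S)\<^sup>2"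
    by (rule power_mono) simp
  also have "\<dots> = (1 - m) * S\<^sup>2"
    using \<open>m \<le> 1\<close> by (simp add: power_mult_distrib)
  also have "\<dots> \<le> (1 - m) * (X * E)"
    unfolding S_def X_def E_def using \<open>m \<le> 1\<close>
    by (intro mult_left_mono Cauchy_Schwarz_ineq_sum) simp
  finally have P_squared: "((norm P)\<^sup>2)\<^sup>2 \<le> (1 - m) * X * E"
    by (simp only: mult.assoc)
  have "m * X \<le> (\<Sum>j\<in>UNIV. a j * (norm (w j))\<^sup>2)"
    unfolding X_def sum_distrib_left using a by (intro sum_mono mult_right_mono) auto
  also have "\<dots> \<le> (norm P)\<^sup>2"
    unfolding P_eq by (rule norm_sum_tilt_lower_bound) (use a \<open>0 \<le> m\<close> in \<open>meson order_trans\<close>)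
  finally have "m * X \<le> (norm P)\<^sup>2" .
  moreover have "0 \<le> E" unfolding E_def by (simp add: sum_nonneg)
  ultimately have "m * (norm P)\<^sup>2 \<le> (1 - m) * E"
    using \<open>0 \<le> m\<close> \<open>m \<le> 1\<close> P_squared by (intro mult_le_from_product_bounds) simp_all
  then show ?thesis unfolding P_def E_def q_def .
qed

end

theorem proposition2:
  fixes h :: "complex^'n"
    and W :: "'l::finite \<Rightarrow> (complex^'n) set"
    and U :: "'l \<Rightarrow> complex^'n \<Rightarrow> complex^'n"
    and \<alpha> :: "'l \<Rightarrow> real"
  assumes "norm h = 1"
    and "\<And>j. csubspace (W j)"
    and "\<And>j. cunitary (U j)"
    and "\<And>j. 0 < \<alpha> j \<and> \<alpha> j < 1"
  shows "Max (range (\<lambda>j. (1 - \<alpha> j) * (norm (cproj (W j) h))\<^sup>2))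
           \<le> (norm (cproj (tilted_span U \<alpha> W) (embed0 h :: complex^('n \<times> 'l option))))\<^sup>2
      \<and> (norm (cproj (tilted_span U \<alpha> W) (embed0 h :: complex^('n \<times> 'l option))))\<^sup>2
           \<le> (1 - Min (range \<alpha>)) / Min (range \<alpha>) * (\<Sum>j\<in>UNIV. (norm (cproj (W j) h))\<^sup>2)"
proof
  note W = assms(2) and U = assms(3) and \<alpha> = assms(4)
  let ?N = "(norm (cproj (tilted_span U \<alpha> W) (embed0 h :: complex^('n \<times> 'l option))))\<^sup>2"
  show "Max (range (\<lambda>j. (1 - \<alpha> j) * (norm (cproj (W j) h))\<^sup>2)) \<le> ?N"
  proof (rule Max.boundedI)
    fix y assume "y \<in> range (\<lambda>j. (1 - \<alpha> j) * (norm (cproj (W j) h))\<^sup>2)"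
    then obtain j where "y = (1 - \<alpha> j) * (norm (cproj (W j) h))\<^sup>2" by blast
    also have "\<dots> \<le> ?N"
      using \<alpha>[of j] by (intro norm_cproj_tilted_span_lower_bound[OF U W]) auto
    finally show "y \<le> ?N" .
  qed simp_all
  define m where "m = Min (range \<alpha>)"
  have "m \<in> range \<alpha>" unfolding m_def by (rule Min_in) auto
  then have "0 < m" using \<alpha> by auto
  moreover have "m \<le> \<alpha> j" for j unfolding m_def by (rule Min_le) auto
  ultimately have "m * ?N \<le> (1 - m) * (\<Sum>j\<in>UNIV. (norm (cproj (W j) h))\<^sup>2)"
    using \<alpha> by (intro norm_cproj_tilted_span_upper_bound[OF U W]) (auto intro: less_imp_le)
  with \<open>0 < m\<close> show "?N \<le> (1 - Min (range \<alpha>)) / Min (range \<alpha>) * (\<Sum>j\<in>UNIV. (norm (cproj (W j) h))\<^sup>2)"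
    unfolding m_def[symmetric] by (simp add: pos_le_divide_eq mult.commute)
qed

end
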